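(* For any integer $m\ge2$ and any $0\le\rho\le\sqrt{\frac{1}{3\sqrt m}}$, let $\Delta_\rho:\mathcal{M}_m\to\mathcal{M}_m$ be the noise operator. Then for every integer $n\ge1$, the normalized $2$-to-$4$ norm satisfies $\|\Delta_\rho^{\otimes n}\|'_{2\to4}\le1$.
   Context: $\Delta_\rho(P)=\rho P+\frac{1-\rho}{m}(\mathrm{Tr}P)\mathrm{id}_m$ for $P\in\mathcal{M}_m$ (complex $m\times m$ matrices). For $M\in\mathcal{M}_k$ with singular values $s_1,\ldots,s_k$, the normalized $p$-norm is $\|M\|'_p=(\frac1k\sum_i s_i^p)^{1/p}$. For a linear map $L:\mathcal{M}_k\to\mathcal{M}_k$, $\|L\|'_{p\to q}=\sup_{M\ne0}\|L(M)\|'_q/\|M\|'_p$. Here $k=m^n$. *)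

theory Defs
  imports "Jordan_Normal_Form.Char_Poly" "Jordan_Normal_Form.Schur_Decomposition"
begin

definition mat_tr :: "complex mat \<Rightarrow> complex" where
  "mat_tr A = (\<Sum>i<dim_row A. A $$ (i,i))"

definition noise_op :: "nat \<Rightarrow> real \<Rightarrow> complex mat \<Rightarrow> complex mat" where
  "noise_op m \<rho> P = complex_of_real \<rho> \<cdot>\<^sub>m P
      + (complex_of_real ((1 - \<rho>) / real m) * mat_tr P) \<cdot>\<^sub>m (1\<^sub>m m)"

(* j-th base-m digit of i: identifies {0..<m^n} with {0..<m}^n *)
definition digit :: "nat \<Rightarrow> nat \<Rightarrow> nat \<Rightarrow> nat" where
  "digit m j i = (i div m ^ j) mod m"

definition unit_mat :: "nat \<Rightarrow> nat \<Rightarrow> nat \<Rightarrow> complex mat" where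
  "unit_mat m a b = mat m m (\<lambda>(c,d). if c = a \<and> d = b then 1 else 0)"

(* n-fold tensor power L^{\<otimes>n} of a linear map L on M_m, acting on M_{m^n}
   (M_{m^n} = M_m^{\<otimes>n} via base-m digits); defined by linear extension of
   L^{\<otimes>n}(E_{a_1 b_1} \<otimes> ... \<otimes> E_{a_n b_n}) = L(E_{a_1 b_1}) \<otimes> ... \<otimes> L(E_{a_n b_n}) *)
definition tensor_pow_map ::
  "nat \<Rightarrow> nat \<Rightarrow> (complex mat \<Rightarrow> complex mat) \<Rightarrow> complex mat \<Rightarrow> complex mat" where
  "tensor_pow_map m n L M = mat (m ^ n) (m ^ n) (\<lambda>(c,d).
      \<Sum>a<m ^ n. \<Sum>b<m ^ n.
        (\<Prod>j<n. L (unit_mat m (digit m j a) (digit m j b)) $$ (digit m j c, digit m j d))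
        * M $$ (a,b))"

definition sing_vals :: "complex mat \<Rightarrow> real multiset" where
  "sing_vals M = image_mset (\<lambda>z. sqrt (Re z)) (proots (char_poly (mat_adjoint M * M)))"

definition norm_p' :: "real \<Rightarrow> complex mat \<Rightarrow> real" where
  "norm_p' p M = ((1 / real (dim_row M)) * sum_mset (image_mset (\<lambda>s. s powr p) (sing_vals M)))
                   powr (1 / p)"

definition op_norm_pq :: "nat \<Rightarrow> real \<Rightarrow> real \<Rightarrow> (complex mat \<Rightarrow> complex mat) \<Rightarrow> real" where
  "op_norm_pq k p q L = Sup {norm_p' q (L M) / norm_p' p M | M.
        M \<in> carrier_mat k k \<and> M \<noteq> 0\<^sub>m k k}"

end

theory Submission
  imports Defs "HOL-Analysis.L2_Norm" "HOL-Analysis.Convex"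
begin

(* Write |X|_p for the unnormalised Schatten norms and T_n for the n-th tensor power of the noise
   operator. Both normalised norms are traces of powers of M*M, so the claim is
   m^n |T_n M|_4^4 \<le> |M|_2^4, which we prove by induction on n.
   Split M = \<Sum>_ab E_ab \<otimes> M_ab along the leading tensor factor, let M_0 be the mean of the diagonal
   blocks and M'_ab = M_ab - [a = b] M_0. Then |M|_2^2 = m |M_0|_2^2 + \<Sum>_ab |M'_ab|_2^2, and
   T_(n+1) M = 1 \<otimes> C + \<rho> N with C = T_n M_0, N_ab = T_n M'_ab and \<Sum>_a N_aa = 0.
   Expanding |1 \<otimes> C + \<rho> N|_4^4, the term linear in \<rho> vanishes, and Hoelder and Cauchy-Schwarz
   bound the others through g = |C|_4^2 and h = \<Sum>_ab |N_ab|_4^2. The induction hypothesis gives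
   m^(n/2) g \<le> |M_0|_2^2 and m^(n/2) h \<le> \<Sum>_ab |M'_ab|_2^2, and \<rho>^2 sqrt m \<le> 1/3 is exactly what
   closes the resulting quadratic inequality. *)

section \<open>Matrices as functions on an index set\<close>

(* A matrix over an arbitrary finite index set I, so that the block decomposition
   M_(m k) = M_m \<otimes> M_k becomes a mere reindexing by {..<m} \<times> {..<k}. *)
type_synonym 'i fmat = "'i \<Rightarrow> 'i \<Rightarrow> complex"

definition fmat_mult :: "'i set \<Rightarrow> 'i fmat \<Rightarrow> 'i fmat \<Rightarrow> 'i fmat" where
  "fmat_mult I A B = (\<lambda>i j. \<Sum>l\<in>I. A i l * B l j)"

definition fmat_adj :: "'i fmat \<Rightarrow> 'i fmat" where
  "fmat_adj A = (\<lambda>i j. cnj (A j i))"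

definition fmat_trace :: "'i set \<Rightarrow> 'i fmat \<Rightarrow> complex" where
  "fmat_trace I A = (\<Sum>i\<in>I. A i i)"

definition hs_inner :: "'i set \<Rightarrow> 'i fmat \<Rightarrow> 'i fmat \<Rightarrow> complex" where
  "hs_inner I A B = (\<Sum>i\<in>I. \<Sum>j\<in>I. cnj (A i j) * B i j)"

definition frob_sq :: "'i set \<Rightarrow> 'i fmat \<Rightarrow> real" where
  "frob_sq I A = (\<Sum>i\<in>I. \<Sum>j\<in>I. (cmod (A i j))\<^sup>2)"

definition schatten4_pow4 :: "'i set \<Rightarrow> 'i fmat \<Rightarrow> real" where
  "schatten4_pow4 I A = frob_sq I (fmat_mult I (fmat_adj A) A)"

lemma fmat_adj_adj [simp]: "fmat_adj (fmat_adj A) = A"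
  by (simp add: fmat_adj_def)

lemma fmat_mult_assoc: "fmat_mult I (fmat_mult I A B) C = fmat_mult I A (fmat_mult I B C)"
  unfolding fmat_mult_def
  by (auto simp: sum_distrib_left sum_distrib_right mult.assoc intro!: ext sum.swap)

lemma fmat_adj_mult: "fmat_adj (fmat_mult I A B) = fmat_mult I (fmat_adj B) (fmat_adj A)"
  unfolding fmat_mult_def fmat_adj_def by (auto simp: mult.commute intro!: ext)

lemma fmat_adj_gram: "fmat_adj (fmat_mult I (fmat_adj A) A) = fmat_mult I (fmat_adj A) A"
  by (simp add: fmat_adj_mult)

lemma fmat_mult_zero_left [simp]: "fmat_mult I (\<lambda>_ _. 0) B = (\<lambda>_ _. 0)"
  by (simp add: fmat_mult_def)

lemma fmat_mult_zero_right [simp]: "fmat_mult I B (\<lambda>_ _. 0) = (\<lambda>_ _. 0)"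
  by (simp add: fmat_mult_def)

lemma fmat_trace_zero [simp]: "fmat_trace I (\<lambda>_ _. 0) = 0"
  by (simp add: fmat_trace_def)

lemma fmat_trace_mult_commute: "fmat_trace I (fmat_mult I A B) = fmat_trace I (fmat_mult I B A)"
  unfolding fmat_mult_def fmat_trace_def by (subst sum.swap) (simp add: mult.commute)

lemma fmat_trace_adj_mult: "fmat_trace I (fmat_mult I (fmat_adj A) B) = hs_inner I A B"
  unfolding fmat_mult_def fmat_trace_def hs_inner_def fmat_adj_def by (subst sum.swap) simp

lemma fmat_trace_mult_sum_right:
  "(\<Sum>a\<in>A. fmat_trace I (fmat_mult I D (W a))) = fmat_trace I (fmat_mult I D (\<lambda>i j. \<Sum>a\<in>A. W a i j))"
  unfolding fmat_trace_def fmat_mult_def sum_distrib_left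
  by (subst sum.swap, rule sum.cong[OF refl], rule sum.swap)

lemma hs_inner_add_right: "hs_inner I A (\<lambda>i j. B i j + C i j) = hs_inner I A B + hs_inner I A C"
  unfolding hs_inner_def by (simp add: sum.distrib algebra_simps)

lemma hs_inner_scale_left: "hs_inner I (\<lambda>i j. c * A i j) B = cnj c * hs_inner I A B"
  unfolding hs_inner_def by (simp add: sum_distrib_left algebra_simps)

lemma hs_inner_scale_right: "hs_inner I A (\<lambda>i j. c * B i j) = c * hs_inner I A B"
  unfolding hs_inner_def by (simp add: sum_distrib_left algebra_simps)

lemma frob_sq_eq_hs_inner: "complex_of_real (frob_sq I A) = hs_inner I A A"
  unfolding frob_sq_def hs_inner_def
  by (simp only: of_real_sum complex_norm_square) (simp add: mult.commute)

lemma frob_sq_eq_trace: "complex_of_real (frob_sq I A) = fmat_trace I (fmat_mult I (fmat_adj A) A)"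
  by (simp add: fmat_trace_adj_mult frob_sq_eq_hs_inner)

lemma frob_sq_nonneg [simp]: "0 \<le> frob_sq I A"
  unfolding frob_sq_def by (intro sum_nonneg) auto

lemma frob_sq_zero [simp]: "frob_sq I (\<lambda>_ _. 0) = 0"
  by (simp add: frob_sq_def)

lemma frob_sq_pos:
  assumes "finite I" "i \<in> I" "j \<in> I" "A i j \<noteq> 0"
  shows "0 < frob_sq I A"
proof -
  have "0 < (cmod (A i j))\<^sup>2"
    using assms by simp
  also have "\<dots> \<le> frob_sq I A"
    unfolding frob_sq_def using assms
    by (intro order_trans[OF _ member_le_sum[of i]] member_le_sum) (auto intro: sum_nonneg)
  finally show ?thesis .
qed

lemma schatten4_pow4_nonneg [simp]: "0 \<le> schatten4_pow4 I A"
  by (simp add: schatten4_pow4_def)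

lemma frob_sq_cong: "(\<And>i j. i \<in> I \<Longrightarrow> j \<in> I \<Longrightarrow> A i j = B i j) \<Longrightarrow> frob_sq I A = frob_sq I B"
  unfolding frob_sq_def by (intro sum.cong refl) auto

lemma fmat_mult_cong:
  assumes "\<And>i j. i \<in> I \<Longrightarrow> j \<in> I \<Longrightarrow> A i j = A' i j"
    and "\<And>i j. i \<in> I \<Longrightarrow> j \<in> I \<Longrightarrow> B i j = B' i j"
    and "i \<in> I" "j \<in> I"
  shows "fmat_mult I A B i j = fmat_mult I A' B' i j"
  unfolding fmat_mult_def using assms by (intro sum.cong) auto

lemma schatten4_pow4_cong:
  assumes "\<And>i j. i \<in> I \<Longrightarrow> j \<in> I \<Longrightarrow> A i j = B i j"
  shows "schatten4_pow4 I A = schatten4_pow4 I B"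
  unfolding schatten4_pow4_def using assms
  by (intro frob_sq_cong fmat_mult_cong) (auto simp: fmat_adj_def)

lemma frob_sq_reindex: "bij_betw h J I \<Longrightarrow> frob_sq J (\<lambda>x y. A (h x) (h y)) = frob_sq I A"
  unfolding frob_sq_def
  by (subst sum.reindex_bij_betw[where h=h, symmetric], assumption,
      rule sum.cong[OF refl], rule sum.reindex_bij_betw)

lemma schatten4_pow4_reindex:
  assumes "bij_betw h J I"
  shows "schatten4_pow4 J (\<lambda>x y. A (h x) (h y)) = schatten4_pow4 I A"
proof -
  have "fmat_mult J (fmat_adj (\<lambda>x y. A (h x) (h y))) (\<lambda>x y. A (h x) (h y))
      = (\<lambda>x y. fmat_mult I (fmat_adj A) A (h x) (h y))"
    unfolding fmat_mult_def fmat_adj_def by (intro ext) (rule sum.reindex_bij_betw[OF assms])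
  then show ?thesis
    unfolding schatten4_pow4_def using frob_sq_reindex[OF assms] by simp
qed

lemma frob_sq_scale: "frob_sq I (\<lambda>i j. c * A i j) = (cmod c)\<^sup>2 * frob_sq I A"
  unfolding frob_sq_def by (simp add: norm_mult power_mult_distrib sum_distrib_left)

lemma frob_sq_add3:
  "frob_sq I (\<lambda>i j. P i j + Q i j + R i j) = frob_sq I P + frob_sq I Q + frob_sq I R
     + 2 * Re (hs_inner I P Q) + 2 * Re (hs_inner I P R) + 2 * Re (hs_inner I Q R)"
proof -
  have "(cmod (p + q + r))\<^sup>2 = (cmod p)\<^sup>2 + (cmod q)\<^sup>2 + (cmod r)\<^sup>2
      + 2 * Re (cnj p * q) + 2 * Re (cnj p * r) + 2 * Re (cnj q * r)" for p q r :: complex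
    by (simp only: cmod_power2) (simp add: power2_eq_square algebra_simps)
  then show ?thesis
    unfolding frob_sq_def hs_inner_def by (simp add: sum.distrib sum_distrib_left Re_sum)
qed

lemma sqrt_frob_sq_eq_L2_set: "sqrt (frob_sq I A) = L2_set (\<lambda>x. cmod (A (fst x) (snd x))) (I \<times> I)"
  unfolding frob_sq_def L2_set_def by (simp add: sum.cartesian_product case_prod_beta)

lemma hs_inner_Cauchy_Schwarz:
  assumes "finite I"
  shows "cmod (hs_inner I A B) \<le> sqrt (frob_sq I A) * sqrt (frob_sq I B)"
proof -
  have "cmod (hs_inner I A B) \<le> (\<Sum>i\<in>I. \<Sum>j\<in>I. cmod (A i j) * cmod (B i j))"
    unfolding hs_inner_def
    by (rule order_trans[OF norm_sum sum_mono], rule order_trans[OF norm_sum])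
      (simp add: norm_mult)
  also have "\<dots> = (\<Sum>x\<in>I \<times> I. \<bar>cmod (A (fst x) (snd x))\<bar> * \<bar>cmod (B (fst x) (snd x))\<bar>)"
    by (simp add: sum.cartesian_product case_prod_beta)
  also have "\<dots> \<le> sqrt (frob_sq I A) * sqrt (frob_sq I B)"
    unfolding sqrt_frob_sq_eq_L2_set by (rule L2_set_mult_ineq)
  finally show ?thesis .
qed

lemma sqrt_frob_sq_add_le:
  "sqrt (frob_sq I (\<lambda>i j. A i j + B i j)) \<le> sqrt (frob_sq I A) + sqrt (frob_sq I B)"
proof -
  have "sqrt (frob_sq I (\<lambda>i j. A i j + B i j))
      \<le> L2_set (\<lambda>x. cmod (A (fst x) (snd x)) + cmod (B (fst x) (snd x))) (I \<times> I)"
    unfolding sqrt_frob_sq_eq_L2_set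
    by (rule L2_set_mono) (auto intro: norm_triangle_ineq)
  also have "\<dots> \<le> sqrt (frob_sq I A) + sqrt (frob_sq I B)"
    unfolding sqrt_frob_sq_eq_L2_set by (rule L2_set_triangle_ineq)
  finally show ?thesis .
qed

lemma sqrt_frob_sq_sum_le:
  "finite E \<Longrightarrow> sqrt (frob_sq I (\<lambda>i j. \<Sum>e\<in>E. W e i j)) \<le> (\<Sum>e\<in>E. sqrt (frob_sq I (W e)))"
proof (induction E rule: finite_induct)
  case (insert x F)
  then have "sqrt (frob_sq I (\<lambda>i j. \<Sum>e\<in>insert x F. W e i j))
      \<le> sqrt (frob_sq I (W x)) + sqrt (frob_sq I (\<lambda>i j. \<Sum>e\<in>F. W e i j))"
    using sqrt_frob_sq_add_le[of I "W x"] by simp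
  with insert show ?case by simp
qed simp

lemma schatten4_pow4_eq_trace:
  "complex_of_real (schatten4_pow4 I A)
     = fmat_trace I (fmat_mult I (fmat_mult I (fmat_adj A) A) (fmat_mult I (fmat_adj A) A))"
  unfolding schatten4_pow4_def frob_sq_eq_trace by (simp add: fmat_adj_gram)

lemma schatten4_pow4_adj: "schatten4_pow4 I (fmat_adj A) = schatten4_pow4 I A"
proof -
  have "complex_of_real (schatten4_pow4 I (fmat_adj A))
      = fmat_trace I (fmat_mult I A (fmat_mult I (fmat_adj A) (fmat_mult I A (fmat_adj A))))"
    by (simp add: schatten4_pow4_eq_trace fmat_mult_assoc)
  also have "\<dots> = fmat_trace I (fmat_mult I (fmat_mult I (fmat_adj A) (fmat_mult I A (fmat_adj A))) A)"
    by (rule fmat_trace_mult_commute)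
  also have "\<dots> = complex_of_real (schatten4_pow4 I A)"
    by (simp add: schatten4_pow4_eq_trace fmat_mult_assoc)
  finally show ?thesis by simp
qed

lemma hs_inner_gram_gram:
  "hs_inner I (fmat_mult I (fmat_adj X) X) (fmat_mult I (fmat_adj Y) Y)
     = complex_of_real (frob_sq I (fmat_mult I X (fmat_adj Y)))"
proof -
  have "complex_of_real (frob_sq I (fmat_mult I X (fmat_adj Y)))
      = fmat_trace I (fmat_mult I Y (fmat_mult I (fmat_adj X) (fmat_mult I X (fmat_adj Y))))"
    by (simp add: frob_sq_eq_trace fmat_adj_mult fmat_mult_assoc)
  also have "\<dots> = fmat_trace I (fmat_mult I (fmat_mult I (fmat_adj X) (fmat_mult I X (fmat_adj Y))) Y)"
    by (rule fmat_trace_mult_commute)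
  also have "\<dots> = hs_inner I (fmat_mult I (fmat_adj X) X) (fmat_mult I (fmat_adj Y) Y)"
    by (simp add: fmat_mult_assoc fmat_adj_gram flip: fmat_trace_adj_mult)
  finally show ?thesis by simp
qed

(* Hoelder's inequality for Schatten norms, |UV|_2^2 \<le> |U|_4^2 |V|_4^2: Cauchy-Schwarz
   applied to |UV|_2^2 = \<langle>U*U, VV*\<rangle>. *)
lemma frob_sq_mult_le:
  assumes "finite I"
  shows "frob_sq I (fmat_mult I U V) \<le> sqrt (schatten4_pow4 I U) * sqrt (schatten4_pow4 I V)"
proof -
  have "complex_of_real (frob_sq I (fmat_mult I U V))
      = hs_inner I (fmat_mult I (fmat_adj U) U) (fmat_mult I V (fmat_adj V))"
    using hs_inner_gram_gram[of I U "fmat_adj V"] by simp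
  then have "frob_sq I (fmat_mult I U V)
      = cmod (hs_inner I (fmat_mult I (fmat_adj U) U) (fmat_mult I V (fmat_adj V)))"
    by (metis abs_of_nonneg frob_sq_nonneg norm_of_real)
  also have "\<dots> \<le> sqrt (schatten4_pow4 I U) * sqrt (schatten4_pow4 I (fmat_adj V))"
    unfolding schatten4_pow4_def using hs_inner_Cauchy_Schwarz[OF assms] by simp
  finally show ?thesis by (simp add: schatten4_pow4_adj)
qed

section \<open>Block matrices and the perturbation estimate\<close>

definition block_mat :: "'a set \<Rightarrow> 'b set \<Rightarrow> ('a \<Rightarrow> 'a \<Rightarrow> 'b fmat) \<Rightarrow> ('a \<times> 'b) fmat" where
  "block_mat A S W = (\<lambda>x y. if fst x \<in> A \<and> fst y \<in> A \<and> snd x \<in> S \<and> snd y \<in> S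
      then W (fst x) (fst y) (snd x) (snd y) else 0)"

definition block_diag :: "'a set \<Rightarrow> 'b set \<Rightarrow> 'b fmat \<Rightarrow> ('a \<times> 'b) fmat" where
  "block_diag A S D = block_mat A S (\<lambda>a b. if a = b then D else (\<lambda>_ _. 0))"

lemma block_mat_cong:
  "(\<And>a b c d. a \<in> A \<Longrightarrow> b \<in> A \<Longrightarrow> c \<in> S \<Longrightarrow> d \<in> S \<Longrightarrow> W a b c d = W' a b c d)
     \<Longrightarrow> block_mat A S W = block_mat A S W'"
  unfolding block_mat_def by (auto intro!: ext)

lemma fmat_mult_block_mat:
  "fmat_mult (A \<times> S) (block_mat A S V) (block_mat A S W)
     = block_mat A S (\<lambda>a b c d. \<Sum>e\<in>A. fmat_mult S (V a e) (W e b) c d)"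
  unfolding fmat_mult_def block_mat_def sum.cartesian_product'
  by (intro ext) (auto intro!: sum.cong)

lemma fmat_adj_block_mat: "fmat_adj (block_mat A S W) = block_mat A S (\<lambda>a b. fmat_adj (W b a))"
  unfolding fmat_adj_def block_mat_def by (auto intro!: ext)

lemma fmat_adj_block_diag: "fmat_adj (block_diag A S D) = block_diag A S (fmat_adj D)"
  unfolding block_diag_def fmat_adj_block_mat by (rule block_mat_cong) (auto simp: fmat_adj_def)

lemma frob_sq_block_mat: "frob_sq (A \<times> S) (block_mat A S W) = (\<Sum>a\<in>A. \<Sum>b\<in>A. frob_sq S (W a b))"
proof -
  have "frob_sq (A \<times> S) (block_mat A S W) = (\<Sum>a\<in>A. \<Sum>c\<in>S. \<Sum>b\<in>A. \<Sum>d\<in>S. (cmod (W a b c d))\<^sup>2)"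
    unfolding frob_sq_def block_mat_def sum.cartesian_product' by (simp cong: sum.cong_simp)
  also have "\<dots> = (\<Sum>a\<in>A. \<Sum>b\<in>A. \<Sum>c\<in>S. \<Sum>d\<in>S. (cmod (W a b c d))\<^sup>2)"
    by (rule sum.cong[OF refl]) (rule sum.swap)
  finally show ?thesis unfolding frob_sq_def .
qed

lemma fmat_trace_block_mat: "fmat_trace (A \<times> S) (block_mat A S W) = (\<Sum>a\<in>A. fmat_trace S (W a a))"
  unfolding fmat_trace_def block_mat_def sum.cartesian_product' by (auto intro!: sum.cong)

lemma fmat_mult_block_diag_block_mat:
  "finite A \<Longrightarrow> fmat_mult (A \<times> S) (block_diag A S D) (block_mat A S W)
     = block_mat A S (\<lambda>a b. fmat_mult S D (W a b))"
  unfolding block_diag_def fmat_mult_block_mat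
  by (rule block_mat_cong)
    (simp add: if_distrib[where f="\<lambda>M. fmat_mult S M _"] if_distrib[where f="\<lambda>M. M _ _"] cong: if_cong)

lemma fmat_mult_block_mat_block_diag:
  "finite A \<Longrightarrow> fmat_mult (A \<times> S) (block_mat A S W) (block_diag A S D)
     = block_mat A S (\<lambda>a b. fmat_mult S (W a b) D)"
  unfolding block_diag_def fmat_mult_block_mat
  by (rule block_mat_cong)
    (simp add: if_distrib[where f="\<lambda>M. fmat_mult S _ M"] if_distrib[where f="\<lambda>M. M _ _"] cong: if_cong)

lemma fmat_mult_block_diag:
  "finite A \<Longrightarrow> fmat_mult (A \<times> S) (block_diag A S D) (block_diag A S E)
     = block_diag A S (fmat_mult S D E)"
  by (subst (2) block_diag_def, subst fmat_mult_block_diag_block_mat)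
    (auto simp: block_diag_def intro: block_mat_cong)

lemma frob_sq_block_diag: "finite A \<Longrightarrow> frob_sq (A \<times> S) (block_diag A S D) = card A * frob_sq S D"
  unfolding block_diag_def frob_sq_block_mat
  by (simp add: if_distrib[where f="frob_sq S"] cong: if_cong)

lemma schatten4_pow4_block_diag:
  "finite A \<Longrightarrow> schatten4_pow4 (A \<times> S) (block_diag A S D) = card A * schatten4_pow4 S D"
  unfolding schatten4_pow4_def fmat_adj_block_diag by (simp add: fmat_mult_block_diag frob_sq_block_diag)

lemma frob_sq_block_diag_mult_le:
  assumes "finite A" "finite S"
  shows "frob_sq (A \<times> S) (fmat_mult (A \<times> S) (block_diag A S D) (block_mat A S W))
    \<le> sqrt (schatten4_pow4 S D) * (\<Sum>a\<in>A. \<Sum>b\<in>A. sqrt (schatten4_pow4 S (W a b)))"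
  unfolding fmat_mult_block_diag_block_mat[OF assms(1)] frob_sq_block_mat sum_distrib_left
  using frob_sq_mult_le[OF assms(2)] by (intro sum_mono)

lemma frob_sq_block_mult_diag_le:
  assumes "finite A" "finite S"
  shows "frob_sq (A \<times> S) (fmat_mult (A \<times> S) (block_mat A S W) (block_diag A S D))
    \<le> sqrt (schatten4_pow4 S D) * (\<Sum>a\<in>A. \<Sum>b\<in>A. sqrt (schatten4_pow4 S (W a b)))"
  unfolding fmat_mult_block_mat_block_diag[OF assms(1)] frob_sq_block_mat sum_distrib_left
  by (intro sum_mono) (metis frob_sq_mult_le[OF assms(2)] mult.commute)

lemma schatten4_pow4_add_smult:
  fixes I :: "'i set" and X Y :: "'i fmat" and r :: real
  defines "P \<equiv> fmat_mult I (fmat_adj X) X"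
    and "Q \<equiv> \<lambda>i j. fmat_mult I (fmat_adj X) Y i j + fmat_mult I (fmat_adj Y) X i j"
    and "R \<equiv> fmat_mult I (fmat_adj Y) Y"
  shows "schatten4_pow4 I (\<lambda>i j. X i j + complex_of_real r * Y i j)
    = frob_sq I P + r\<^sup>2 * frob_sq I Q + r ^ 4 * frob_sq I R + 2 * r * Re (hs_inner I P Q)
      + 2 * r\<^sup>2 * Re (hs_inner I P R) + 2 * r ^ 3 * Re (hs_inner I Q R)"
proof -
  have "fmat_mult I (fmat_adj (\<lambda>i j. X i j + complex_of_real r * Y i j))
          (\<lambda>i j. X i j + complex_of_real r * Y i j)
      = (\<lambda>i j. P i j + complex_of_real r * Q i j + complex_of_real (r\<^sup>2) * R i j)"
    unfolding P_def Q_def R_def fmat_mult_def fmat_adj_def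
    by (auto intro!: ext simp: sum.distrib sum_distrib_left algebra_simps power2_eq_square)
  then have "schatten4_pow4 I (\<lambda>i j. X i j + complex_of_real r * Y i j)
      = frob_sq I (\<lambda>i j. P i j + complex_of_real r * Q i j + complex_of_real (r\<^sup>2) * R i j)"
    by (simp add: schatten4_pow4_def)
  also have "\<dots> = frob_sq I P + r\<^sup>2 * frob_sq I Q + r ^ 4 * frob_sq I R + 2 * r * Re (hs_inner I P Q)
      + 2 * r\<^sup>2 * Re (hs_inner I P R) + 2 * r ^ 3 * Re (hs_inner I Q R)"
  proof -
    have "(cmod (complex_of_real r))\<^sup>2 = r\<^sup>2" "(cmod (complex_of_real (r\<^sup>2)))\<^sup>2 = r ^ 4"
      by (simp_all add: norm_power flip: power_mult)
    then show ?thesis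
      unfolding frob_sq_add3 frob_sq_scale hs_inner_scale_left hs_inner_scale_right
      by (simp add: algebra_simps eval_nat_numeral)
  qed
  finally show ?thesis .
qed

lemma fmat_trace_block_diag_mult:
  "finite A \<Longrightarrow> fmat_trace (A \<times> S) (fmat_mult (A \<times> S) (block_diag A S D) (block_mat A S W))
     = fmat_trace S (fmat_mult S D (\<lambda>c d. \<Sum>a\<in>A. W a a c d))"
  by (simp add: fmat_mult_block_diag_block_mat fmat_trace_block_mat fmat_trace_mult_sum_right)

(* The diagonal blocks of Y sum to zero, which kills the only term of order r. *)
lemma hs_inner_block_gram_cross_eq_0:
  fixes A :: "'a set" and S :: "'b set" and C :: "'b fmat" and N :: "'a \<Rightarrow> 'a \<Rightarrow> 'b fmat"
  assumes "finite A" and diag_sum: "\<And>c d. (\<Sum>a\<in>A. N a a c d) = 0"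
  defines "X \<equiv> block_diag A S C" and "Y \<equiv> block_mat A S N"
  shows "hs_inner (A \<times> S) (fmat_mult (A \<times> S) (fmat_adj X) X)
    (\<lambda>i j. fmat_mult (A \<times> S) (fmat_adj X) Y i j + fmat_mult (A \<times> S) (fmat_adj Y) X i j) = 0"
proof -
  let ?I = "A \<times> S"
  let ?P = "fmat_mult ?I (fmat_adj X) X"
  have sum0: "(\<lambda>c d. \<Sum>a\<in>A. N a a c d) = (\<lambda>_ _. 0)"
    and sum0_adj: "(\<lambda>c d. \<Sum>a\<in>A. fmat_adj (N a a) c d) = (\<lambda>_ _. 0)"
    using diag_sum by (auto simp: fmat_adj_def simp flip: cnj_sum)
  have "hs_inner ?I ?P (fmat_mult ?I (fmat_adj X) Y)
      = fmat_trace ?I (fmat_mult ?I (fmat_mult ?I ?P (fmat_adj X)) Y)"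
    by (simp add: fmat_mult_assoc fmat_adj_gram flip: fmat_trace_adj_mult)
  also have "\<dots> = 0"
    unfolding X_def Y_def fmat_adj_block_diag
    by (simp add: assms(1) fmat_mult_block_diag fmat_trace_block_diag_mult sum0)
  finally have left: "hs_inner ?I ?P (fmat_mult ?I (fmat_adj X) Y) = 0" .
  have "hs_inner ?I ?P (fmat_mult ?I (fmat_adj Y) X)
      = fmat_trace ?I (fmat_mult ?I (fmat_mult ?I ?P (fmat_adj Y)) X)"
    by (simp add: fmat_mult_assoc fmat_adj_gram flip: fmat_trace_adj_mult)
  also have "\<dots> = fmat_trace ?I (fmat_mult ?I X (fmat_mult ?I ?P (fmat_adj Y)))"
    by (rule fmat_trace_mult_commute)
  also have "\<dots> = 0"
    unfolding X_def Y_def fmat_adj_block_diag fmat_adj_block_mat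
    by (simp add: assms(1) fmat_mult_block_diag fmat_trace_block_diag_mult sum0_adj
        flip: fmat_mult_assoc)
  finally show ?thesis
    using left by (simp add: hs_inner_add_right)
qed

lemma frob_sq_block_gram_le:
  assumes "finite A" "finite S"
  shows "frob_sq (A \<times> S) (fmat_mult (A \<times> S) (fmat_adj (block_mat A S N)) (block_mat A S N))
    \<le> (\<Sum>a\<in>A. \<Sum>b\<in>A. sqrt (schatten4_pow4 S (N a b)))\<^sup>2"
proof -
  define s where "s a b = sqrt (schatten4_pow4 S (N a b))" for a b
  have entry: "frob_sq S (\<lambda>c d. \<Sum>e\<in>A. fmat_mult S (fmat_adj (N e a)) (N e b) c d)
      \<le> (\<Sum>e\<in>A. s e a) * (\<Sum>e\<in>A. s e b)" for a b
  proof -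
    have "sqrt (frob_sq S (\<lambda>c d. \<Sum>e\<in>A. fmat_mult S (fmat_adj (N e a)) (N e b) c d))
        \<le> (\<Sum>e\<in>A. sqrt (frob_sq S (fmat_mult S (fmat_adj (N e a)) (N e b))))"
      by (rule sqrt_frob_sq_sum_le[OF assms(1)])
    also have "\<dots> \<le> (\<Sum>e\<in>A. sqrt (s e a) * sqrt (s e b))"
    proof (intro sum_mono)
      fix e
      have "frob_sq S (fmat_mult S (fmat_adj (N e a)) (N e b)) \<le> s e a * s e b"
        using frob_sq_mult_le[OF assms(2), of "fmat_adj (N e a)" "N e b"]
        by (simp add: s_def schatten4_pow4_adj)
      then show "sqrt (frob_sq S (fmat_mult S (fmat_adj (N e a)) (N e b))) \<le> sqrt (s e a) * sqrt (s e b)"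
        by (metis real_sqrt_le_mono real_sqrt_mult)
    qed
    finally have "frob_sq S (\<lambda>c d. \<Sum>e\<in>A. fmat_mult S (fmat_adj (N e a)) (N e b) c d)
        \<le> (\<Sum>e\<in>A. sqrt (s e a) * sqrt (s e b))\<^sup>2"
      by (rule sqrt_le_D)
    also have "\<dots> \<le> (\<Sum>e\<in>A. (sqrt (s e a))\<^sup>2) * (\<Sum>e\<in>A. (sqrt (s e b))\<^sup>2)"
      by (rule Cauchy_Schwarz_ineq_sum)
    finally show ?thesis by (simp add: s_def)
  qed
  have "frob_sq (A \<times> S) (fmat_mult (A \<times> S) (fmat_adj (block_mat A S N)) (block_mat A S N))
      \<le> (\<Sum>a\<in>A. \<Sum>b\<in>A. (\<Sum>e\<in>A. s e a) * (\<Sum>e\<in>A. s e b))"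
    unfolding fmat_adj_block_mat fmat_mult_block_mat frob_sq_block_mat by (intro sum_mono entry)
  also have "\<dots> = (\<Sum>a\<in>A. \<Sum>e\<in>A. s e a) * (\<Sum>b\<in>A. \<Sum>e\<in>A. s e b)"
    by (simp add: sum_product)
  also have "(\<Sum>a\<in>A. \<Sum>e\<in>A. s e a) = (\<Sum>a\<in>A. \<Sum>b\<in>A. s a b)"
    by (rule sum.swap)
  finally show ?thesis by (simp add: s_def power2_eq_square)
qed

lemma frob_sq_block_cross_terms_le:
  fixes A :: "'a set" and S :: "'b set" and C :: "'b fmat" and N :: "'a \<Rightarrow> 'a \<Rightarrow> 'b fmat"
  assumes fin: "finite A" "finite S"
  defines "X \<equiv> block_diag A S C" and "Y \<equiv> block_mat A S N"
    and "g \<equiv> sqrt (schatten4_pow4 S C)" and "h \<equiv> \<Sum>a\<in>A. \<Sum>b\<in>A. sqrt (schatten4_pow4 S (N a b))"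
  shows "frob_sq (A \<times> S) (\<lambda>i j. fmat_mult (A \<times> S) (fmat_adj X) Y i j + fmat_mult (A \<times> S) (fmat_adj Y) X i j)
      \<le> 4 * g * h"
    and "frob_sq (A \<times> S) (fmat_mult (A \<times> S) X (fmat_adj Y)) \<le> g * h"
proof -
  let ?I = "A \<times> S"
  have gh: "0 \<le> g * h"
    unfolding g_def h_def by (intro mult_nonneg_nonneg sum_nonneg) auto
  have h_transpose: "(\<Sum>a\<in>A. \<Sum>b\<in>A. sqrt (schatten4_pow4 S (fmat_adj (N b a)))) = h"
    unfolding h_def schatten4_pow4_adj by (rule sum.swap)
  have "frob_sq ?I (fmat_mult ?I (fmat_adj X) Y) \<le> g * h"
    using frob_sq_block_diag_mult_le[OF fin, of "fmat_adj C" N]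
    by (simp add: X_def Y_def g_def h_def fmat_adj_block_diag schatten4_pow4_adj)
  moreover have "frob_sq ?I (fmat_mult ?I (fmat_adj Y) X) \<le> g * h"
    using frob_sq_block_mult_diag_le[OF fin, of "\<lambda>a b. fmat_adj (N b a)" C]
    by (simp add: X_def Y_def g_def h_transpose fmat_adj_block_mat)
  ultimately have "sqrt (frob_sq ?I (\<lambda>i j. fmat_mult ?I (fmat_adj X) Y i j + fmat_mult ?I (fmat_adj Y) X i j))
      \<le> sqrt (g * h) + sqrt (g * h)"
    using sqrt_frob_sq_add_le[of ?I "fmat_mult ?I (fmat_adj X) Y" "fmat_mult ?I (fmat_adj Y) X"]
      real_sqrt_le_mono[of _ "g * h"] by (meson add_mono order_trans)
  then show "frob_sq ?I (\<lambda>i j. fmat_mult ?I (fmat_adj X) Y i j + fmat_mult ?I (fmat_adj Y) X i j)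
      \<le> 4 * g * h"
    using gh by (auto dest!: sqrt_le_D simp: power_mult_distrib)
  show "frob_sq ?I (fmat_mult ?I X (fmat_adj Y)) \<le> g * h"
    using frob_sq_block_diag_mult_le[OF fin, of C "\<lambda>a b. fmat_adj (N b a)"]
    by (simp add: X_def Y_def g_def h_transpose fmat_adj_block_mat)
qed

definition perturbation_bound :: "real \<Rightarrow> real \<Rightarrow> real \<Rightarrow> real \<Rightarrow> real" where
  "perturbation_bound c r g h = c * g\<^sup>2 + 6 * r\<^sup>2 * g * h + 4 * r ^ 3 * sqrt (g * h) * h + r ^ 4 * h\<^sup>2"

lemma schatten4_pow4_block_perturb_le:
  fixes A :: "'a set" and S :: "'b set" and C :: "'b fmat" and N :: "'a \<Rightarrow> 'a \<Rightarrow> 'b fmat"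
  assumes fin: "finite A" "finite S" and diag_sum: "\<And>c d. (\<Sum>a\<in>A. N a a c d) = 0" and "0 \<le> r"
  shows "schatten4_pow4 (A \<times> S) (\<lambda>x y. block_diag A S C x y + complex_of_real r * block_mat A S N x y)
    \<le> perturbation_bound (card A) r (sqrt (schatten4_pow4 S C))
         (\<Sum>a\<in>A. \<Sum>b\<in>A. sqrt (schatten4_pow4 S (N a b)))"
proof -
  let ?I = "A \<times> S"
  define g where "g = sqrt (schatten4_pow4 S C)"
  define h where "h = (\<Sum>a\<in>A. \<Sum>b\<in>A. sqrt (schatten4_pow4 S (N a b)))"
  define X where "X = block_diag A S C"
  define Y where "Y = block_mat A S N"
  define P where "P = fmat_mult ?I (fmat_adj X) X"
  define Q where "Q = (\<lambda>i j. fmat_mult ?I (fmat_adj X) Y i j + fmat_mult ?I (fmat_adj Y) X i j)"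
  define R where "R = fmat_mult ?I (fmat_adj Y) Y"
  have g0: "0 \<le> g" and h0: "0 \<le> h"
    unfolding g_def h_def by (auto intro!: sum_nonneg)
  have frob_P: "frob_sq ?I P = card A * g\<^sup>2"
    using schatten4_pow4_block_diag[OF fin(1)] by (simp add: P_def X_def g_def schatten4_pow4_def)
  have frob_Q: "frob_sq ?I Q \<le> 4 * g * h"
    using frob_sq_block_cross_terms_le(1)[OF fin] by (simp add: Q_def X_def Y_def g_def h_def)
  have frob_R: "frob_sq ?I R \<le> h\<^sup>2"
    unfolding R_def Y_def h_def by (rule frob_sq_block_gram_le[OF fin])
  have PQ: "hs_inner ?I P Q = 0"
    unfolding P_def Q_def X_def Y_def using fin(1) diag_sum by (rule hs_inner_block_gram_cross_eq_0)
  have PR: "Re (hs_inner ?I P R) \<le> g * h"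
    using frob_sq_block_cross_terms_le(2)[OF fin]
    by (simp add: P_def R_def X_def Y_def g_def h_def hs_inner_gram_gram)
  have "Re (hs_inner ?I Q R) \<le> sqrt (frob_sq ?I Q) * sqrt (frob_sq ?I R)"
    using fin complex_Re_le_cmod order_trans hs_inner_Cauchy_Schwarz by (metis finite_SigmaI)
  also have "\<dots> \<le> sqrt (4 * g * h) * sqrt (h\<^sup>2)"
    using frob_Q frob_R g0 h0 by (intro mult_mono real_sqrt_le_mono) auto
  finally have QR: "Re (hs_inner ?I Q R) \<le> 2 * sqrt (g * h) * h"
    using h0 by (simp add: real_sqrt_mult)
  have "schatten4_pow4 ?I (\<lambda>i j. X i j + complex_of_real r * Y i j)
      \<le> card A * g\<^sup>2 + r\<^sup>2 * (4 * g * h) + r ^ 4 * h\<^sup>2 + 2 * r * 0 + 2 * r\<^sup>2 * (g * h)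
        + 2 * r ^ 3 * (2 * sqrt (g * h) * h)"
    unfolding schatten4_pow4_add_smult frob_P PQ
      P_def[symmetric] Q_def[symmetric] R_def[symmetric]
    using frob_Q frob_R PR QR \<open>0 \<le> r\<close>
    by (intro add_mono mult_left_mono order_refl) auto
  then show ?thesis
    by (simp add: perturbation_bound_def X_def Y_def g_def h_def algebra_simps)
qed

section \<open>Singular values and traces\<close>

definition fmat_of_mat :: "complex mat \<Rightarrow> nat fmat" where
  "fmat_of_mat A = (\<lambda>i j. A $$ (i, j))"

lemma mat_tr_eq_fmat_trace: "H \<in> carrier_mat k k \<Longrightarrow> mat_tr H = fmat_trace {..<k} (fmat_of_mat H)"
  by (simp add: mat_tr_def fmat_trace_def fmat_of_mat_def)

lemma index_mult_mat_eq_fmat_mult: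
  assumes "X \<in> carrier_mat k k" "Y \<in> carrier_mat k k" "i < k" "j < k"
  shows "(X * Y) $$ (i, j) = fmat_mult {..<k} (fmat_of_mat X) (fmat_of_mat Y) i j"
  using assms by (simp add: scalar_prod_def fmat_mult_def fmat_of_mat_def atLeast0LessThan)

lemma dim_row_mat_adjoint [simp]: "dim_row (mat_adjoint A) = dim_col A"
  and dim_col_mat_adjoint [simp]: "dim_col (mat_adjoint A) = dim_row A"
  by (simp_all add: mat_adjoint_def)

lemma index_mat_adjoint [simp]:
  "i < dim_col A \<Longrightarrow> j < dim_row A \<Longrightarrow> mat_adjoint A $$ (i, j) = cnj (A $$ (j, i))"
  by (simp add: mat_adjoint_def mat_of_rows_index)

lemma index_mult_mat_vec_eq_sum:
  assumes "H \<in> carrier_mat k k" "v \<in> carrier_vec k" "i < k"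
  shows "(H *\<^sub>v v) $ i = (\<Sum>l<k. H $$ (i, l) * v $ l)"
  using assms by (simp add: scalar_prod_def atLeast0LessThan)

lemma mat_adjoint_carrier: "A \<in> carrier_mat k k \<Longrightarrow> mat_adjoint A \<in> carrier_mat k k"
  by (intro carrier_matI) auto

lemma index_gram_mat_eq_fmat_mult:
  assumes "A \<in> carrier_mat k k" "i < k" "j < k"
  shows "(mat_adjoint A * A) $$ (i, j)
    = fmat_mult {..<k} (fmat_adj (fmat_of_mat A)) (fmat_of_mat A) i j"
  using assms
  by (simp add: scalar_prod_def fmat_mult_def fmat_adj_def fmat_of_mat_def atLeast0LessThan)

lemma mat_tr_mult_eq_fmat_trace:
  assumes "X \<in> carrier_mat k k" "Y \<in> carrier_mat k k"
  shows "mat_tr (X * Y) = fmat_trace {..<k} (fmat_mult {..<k} (fmat_of_mat X) (fmat_of_mat Y))"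
proof -
  have "mat_tr (X * Y) = fmat_trace {..<k} (fmat_of_mat (X * Y))"
    using assms by (intro mat_tr_eq_fmat_trace) auto
  also have "\<dots> = fmat_trace {..<k} (fmat_mult {..<k} (fmat_of_mat X) (fmat_of_mat Y))"
    unfolding fmat_trace_def fmat_of_mat_def[of "X * Y"]
    by (intro sum.cong refl) (rule index_mult_mat_eq_fmat_mult[OF assms]; simp)
  finally show ?thesis .
qed

lemma mat_tr_mult_commute:
  assumes "X \<in> carrier_mat k k" "Y \<in> carrier_mat k k"
  shows "mat_tr (X * Y) = mat_tr (Y * X)"
  unfolding mat_tr_mult_eq_fmat_trace[OF assms] mat_tr_mult_eq_fmat_trace[OF assms(2,1)]
  by (rule fmat_trace_mult_commute)

lemma mat_tr_similar: "similar_mat_wit H B P Q \<Longrightarrow> mat_tr H = mat_tr B"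
proof -
  assume sim: "similar_mat_wit H B P Q"
  note d = similar_mat_witD[OF refl sim]
  have "mat_tr H = mat_tr (P * B * Q)"
    using d(3) by simp
  also have "\<dots> = mat_tr (Q * (P * B))"
    by (rule mat_tr_mult_commute) (use d(5-7) in auto)
  also have "Q * (P * B) = Q * P * B"
    by (rule assoc_mult_mat[symmetric]) (use d(5-7) in auto)
  finally show ?thesis
    using d(2,5) by simp
qed

lemma mat_tr_upper_triangular_square:
  assumes "B \<in> carrier_mat k k" "upper_triangular B"
  shows "mat_tr (B * B) = (\<Sum>i<k. (B $$ (i, i))\<^sup>2)"
proof -
  have "(B * B) $$ (i, i) = (B $$ (i, i))\<^sup>2" if "i < k" for i
  proof -
    have "(B * B) $$ (i, i) = (\<Sum>l<k. B $$ (i, l) * B $$ (l, i))"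
      using assms(1) that by (simp add: scalar_prod_def atLeast0LessThan)
    also have "\<dots> = (\<Sum>l\<in>{i}. B $$ (i, l) * B $$ (l, i))"
      using assms that by (intro sum.mono_neutral_right) (auto simp: upper_triangular_def neq_iff)
    finally show ?thesis by (simp add: power2_eq_square)
  qed
  with assms(1) show ?thesis by (simp add: mat_tr_def)
qed

lemma mat_tr_eq_sum_eigenvalues:
  fixes H :: "complex mat"
  assumes H: "H \<in> carrier_mat k k" and es: "char_poly H = (\<Prod>e\<leftarrow>es. [:- e, 1:])"
  shows "mat_tr H = sum_list es" and "mat_tr (H * H) = (\<Sum>e\<leftarrow>es. e\<^sup>2)"
proof -
  obtain B P Q where "schur_decomposition H es = (B, P, Q)"
    by (cases "schur_decomposition H es")
  from schur_decomposition[OF H es this]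
  have sim: "similar_mat_wit H B P Q" and ut: "upper_triangular B" and diag: "diag_mat B = es"
    by auto
  have B: "B \<in> carrier_mat k k"
    using similar_mat_witD2[OF H sim] by simp
  have sum_diag: "(\<Sum>i<k. f (B $$ (i, i))) = (\<Sum>e\<leftarrow>es. f e)" for f :: "complex \<Rightarrow> complex"
    using B by (simp add: diag[symmetric] diag_mat_def sum_list_sum_nth atLeast0LessThan)
  have "mat_tr H = mat_tr B"
    by (rule mat_tr_similar[OF sim])
  with B sum_diag[of id] show "mat_tr H = sum_list es"
    by (simp add: mat_tr_def)
  have "similar_mat_wit (H * H) (B * B) P Q"
    using similar_mat_wit_pow[OF sim, of 2] H B by (simp add: numeral_2_eq_2)
  then have "mat_tr (H * H) = mat_tr (B * B)"
    by (rule mat_tr_similar)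
  with sum_diag show "mat_tr (H * H) = (\<Sum>e\<leftarrow>es. e\<^sup>2)"
    by (simp add: mat_tr_upper_triangular_square[OF B ut])
qed

lemma hs_inner_mult_gram:
  "hs_inner I V (fmat_mult I (fmat_mult I (fmat_adj A) A) V) = complex_of_real (frob_sq I (fmat_mult I A V))"
  by (simp add: frob_sq_eq_trace fmat_adj_mult fmat_mult_assoc flip: fmat_trace_adj_mult)

(* Test A*A against the matrix whose columns all equal the eigenvector v:
   e |V|_2^2 = <V, A*A V> = |AV|_2^2. *)
lemma eigenvalue_gram_nonneg:
  assumes A: "A \<in> carrier_mat k k" and e: "eigenvalue (mat_adjoint A * A) e"
  shows "\<exists>x\<ge>0. e = complex_of_real x"
proof -
  let ?I = "{..<k}" and ?A = "fmat_of_mat A"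
  have H: "mat_adjoint A * A \<in> carrier_mat k k"
    using mult_carrier_mat[OF mat_adjoint_carrier[OF A] A] .
  obtain v where v: "v \<in> carrier_vec k" "v \<noteq> 0\<^sub>v k" "(mat_adjoint A * A) *\<^sub>v v = e \<cdot>\<^sub>v v"
    using e H unfolding eigenvalue_def eigenvector_def by auto
  define V where "V i j = v $ i" for i j :: nat
  have "fmat_mult ?I (fmat_mult ?I (fmat_adj ?A) ?A) V i j = e * V i j" if "i < k" for i j
  proof -
    have "e * V i j = ((mat_adjoint A * A) *\<^sub>v v) $ i"
      using v(1,3) that by (simp add: V_def)
    also have "\<dots> = (\<Sum>l<k. (mat_adjoint A * A) $$ (i, l) * v $ l)"
      using H v(1) that by (rule index_mult_mat_vec_eq_sum)
    also have "\<dots> = (\<Sum>l<k. fmat_mult ?I (fmat_adj ?A) ?A i l * v $ l)"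
      using index_gram_mat_eq_fmat_mult[OF A that] by (intro sum.cong refl) (simp only: lessThan_iff)
    finally show ?thesis
      by (simp add: fmat_mult_def V_def)
  qed
  then have "hs_inner ?I V (fmat_mult ?I (fmat_mult ?I (fmat_adj ?A) ?A) V) = e * hs_inner ?I V V"
    by (simp add: hs_inner_def sum_distrib_left algebra_simps)
  then have eq: "complex_of_real (frob_sq ?I (fmat_mult ?I ?A V)) = e * complex_of_real (frob_sq ?I V)"
    by (simp add: hs_inner_mult_gram frob_sq_eq_hs_inner)
  obtain i where "i < k" "v $ i \<noteq> 0"
    using v(1,2) by (metis carrier_vecD eq_vecI index_zero_vec)
  then have "0 < frob_sq ?I V"
    by (intro frob_sq_pos[of _ i i]) (auto simp: V_def)
  with eq show ?thesis
    by (intro exI[of _ "frob_sq ?I (fmat_mult ?I ?A V) / frob_sq ?I V"]) (simp add: field_simps)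
qed

lemma proots_prod_linear_factors: "proots (\<Prod>e\<leftarrow>es. [:- e, 1:]) = mset (es :: complex list)"
proof (induction es)
  case (Cons a es)
  have "(\<Prod>e\<leftarrow>es. [:- e, 1:]) \<noteq> 0"
    by (auto simp: prod_list_zero_iff)
  with Cons show ?case
    by (simp add: proots_mult del: mult_pCons_left)
qed simp

lemma char_poly_gram_nonneg_roots:
  assumes A: "A \<in> carrier_mat k k"
  obtains rs where "char_poly (mat_adjoint A * A) = (\<Prod>r\<leftarrow>rs. [:- complex_of_real r, 1:])"
    and "\<And>r. r \<in> set rs \<Longrightarrow> 0 \<le> r"
proof -
  have H: "mat_adjoint A * A \<in> carrier_mat k k"
    using mult_carrier_mat[OF mat_adjoint_carrier[OF A] A] .
  obtain es where es: "char_poly (mat_adjoint A * A) = (\<Prod>e\<leftarrow>es. [:- e, 1:])"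
    using char_poly_factorized[OF H] by blast
  have "\<exists>x\<ge>0. e = complex_of_real x" if "e \<in> set es" for e
    using that eigenvalue_root_char_poly[OF H] es
    by (intro eigenvalue_gram_nonneg[OF A]) (auto simp: poly_prod_list prod_list_zero_iff)
  then have real: "complex_of_real (Re e) = e" and Re_nonneg: "0 \<le> Re e" if "e \<in> set es" for e
    using that by fastforce+
  define rs where "rs = map Re es"
  have es_real: "es = map complex_of_real rs" and nonneg: "\<And>r. r \<in> set rs \<Longrightarrow> 0 \<le> r"
    using real Re_nonneg by (auto simp: rs_def map_idI)
  have "char_poly (mat_adjoint A * A) = (\<Prod>r\<leftarrow>rs. [:- complex_of_real r, 1:])"
    using es unfolding es_real by (simp add: o_def)
  then show thesis
    using nonneg by (rule that)
qed

lemma mat_tr_gram: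
  assumes A: "A \<in> carrier_mat k k"
  shows "mat_tr (mat_adjoint A * A) = complex_of_real (frob_sq {..<k} (fmat_of_mat A))"
    and "mat_tr ((mat_adjoint A * A) * (mat_adjoint A * A))
      = complex_of_real (schatten4_pow4 {..<k} (fmat_of_mat A))"
proof -
  let ?H = "mat_adjoint A * A" and ?G = "fmat_mult {..<k} (fmat_adj (fmat_of_mat A)) (fmat_of_mat A)"
  have H: "?H \<in> carrier_mat k k"
    using mult_carrier_mat[OF mat_adjoint_carrier[OF A] A] .
  have gram: "fmat_of_mat ?H i j = ?G i j" if "i \<in> {..<k}" "j \<in> {..<k}" for i j
    using A that unfolding fmat_of_mat_def[of ?H] by (intro index_gram_mat_eq_fmat_mult) auto
  show "mat_tr ?H = complex_of_real (frob_sq {..<k} (fmat_of_mat A))"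
    unfolding frob_sq_eq_trace mat_tr_eq_fmat_trace[OF H] fmat_trace_def using gram by (intro sum.cong) auto
  show "mat_tr (?H * ?H) = complex_of_real (schatten4_pow4 {..<k} (fmat_of_mat A))"
    unfolding schatten4_pow4_eq_trace mat_tr_mult_eq_fmat_trace[OF H H] fmat_trace_def
    using gram by (intro sum.cong refl fmat_mult_cong) auto
qed

lemma sum_sing_vals_powr:
  assumes A: "A \<in> carrier_mat k k"
  shows "(\<Sum>s\<in>#sing_vals A. s powr 2) = frob_sq {..<k} (fmat_of_mat A)"
    and "(\<Sum>s\<in>#sing_vals A. s powr 4) = schatten4_pow4 {..<k} (fmat_of_mat A)"
proof -
  let ?H = "mat_adjoint A * A"
  have H: "?H \<in> carrier_mat k k"
    using mult_carrier_mat[OF mat_adjoint_carrier[OF A] A] .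
  obtain rs where "char_poly ?H = (\<Prod>r\<leftarrow>rs. [:- complex_of_real r, 1:])"
    and nonneg: "\<And>r. r \<in> set rs \<Longrightarrow> 0 \<le> r"
    using char_poly_gram_nonneg_roots[OF A] by blast
  then have rs: "char_poly ?H = (\<Prod>e\<leftarrow>map complex_of_real rs. [:- e, 1:])"
    by (simp add: o_def)
  have sum_sing_vals: "(\<Sum>s\<in>#sing_vals A. f s) = (\<Sum>r\<leftarrow>rs. f (sqrt r))" for f :: "real \<Rightarrow> real"
    unfolding sing_vals_def rs proots_prod_linear_factors
    by (simp add: sum_mset_sum_list o_def flip: mset_map)
  have "complex_of_real (frob_sq {..<k} (fmat_of_mat A)) = complex_of_real (sum_list rs)"
    by (simp add: mat_tr_eq_sum_eigenvalues(1)[OF H rs] sum_list_of_real flip: mat_tr_gram(1)[OF A])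
  moreover have "complex_of_real (schatten4_pow4 {..<k} (fmat_of_mat A)) = complex_of_real (\<Sum>r\<leftarrow>rs. r\<^sup>2)"
    by (simp add: mat_tr_eq_sum_eigenvalues(2)[OF H rs] o_def flip: sum_list_of_real mat_tr_gram(2)[OF A])
  moreover have "sqrt r powr 2 = r" "sqrt r powr 4 = r\<^sup>2" if "0 \<le> r" for r :: real
    using that by (simp_all add: powr_numeral power4_eq_xxxx power2_eq_square flip: real_sqrt_mult)
  ultimately show "(\<Sum>s\<in>#sing_vals A. s powr 2) = frob_sq {..<k} (fmat_of_mat A)"
    and "(\<Sum>s\<in>#sing_vals A. s powr 4) = schatten4_pow4 {..<k} (fmat_of_mat A)"
    using nonneg unfolding sum_sing_vals of_real_eq_iff by (simp_all cong: map_cong)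
qed

section \<open>Tensor powers of the noise operator\<close>

definition noise_coeff :: "nat \<Rightarrow> real \<Rightarrow> nat \<Rightarrow> nat \<Rightarrow> nat \<Rightarrow> nat \<Rightarrow> complex" where
  "noise_coeff m \<rho> a b c d = (if c = a \<and> d = b then complex_of_real \<rho> else 0)
     + (if a = b \<and> c = d then complex_of_real ((1 - \<rho>) / real m) else 0)"

lemma mat_tr_unit_mat: "a < m \<Longrightarrow> b < m \<Longrightarrow> mat_tr (unit_mat m a b) = (if a = b then 1 else 0)"
  by (simp add: mat_tr_def unit_mat_def if_distrib[of "\<lambda>x. x = _"] cong: if_cong)

lemma index_noise_op_unit_mat:
  assumes "a < m" "b < m" "c < m" "d < m"
  shows "noise_op m \<rho> (unit_mat m a b) $$ (c, d) = noise_coeff m \<rho> a b c d"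
  using assms unfolding noise_op_def noise_coeff_def
  by (simp add: mat_tr_unit_mat) (auto simp: unit_mat_def)

lemma sum_noise_coeff:
  assumes "c < m" "d < m"
  shows "(\<Sum>a<m. \<Sum>b<m. noise_coeff m \<rho> a b c d * T a b)
    = complex_of_real \<rho> * T c d
      + (if c = d then complex_of_real ((1 - \<rho>) / real m) * (\<Sum>a<m. T a a) else 0)"
proof -
  let ?\<mu> = "complex_of_real ((1 - \<rho>) / real m)"
  have "noise_coeff m \<rho> a b c d * T a b = (if c = a \<and> d = b then complex_of_real \<rho> * T a b else 0)
      + (if a = b \<and> c = d then ?\<mu> * T a b else 0)" for a b
    by (simp add: noise_coeff_def distrib_right)
  moreover have "(\<Sum>a<m. \<Sum>b<m. if c = a \<and> d = b then complex_of_real \<rho> * T a b else 0)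
      = (\<Sum>a<m. if a = c then complex_of_real \<rho> * T a d else 0)"
    using assms by (intro sum.cong refl) (auto simp: if_distrib cong: if_cong)
  moreover have "(\<Sum>a<m. \<Sum>b<m. if a = b \<and> c = d then ?\<mu> * T a b else 0)
      = (if c = d then ?\<mu> * (\<Sum>a<m. T a a) else 0)"
    by (auto simp: sum_distrib_left if_distrib cong: if_cong)
  ultimately show ?thesis
    using assms by (simp add: sum.distrib)
qed

definition noise_tensor_pow :: "nat \<Rightarrow> real \<Rightarrow> nat \<Rightarrow> nat fmat \<Rightarrow> nat fmat" where
  "noise_tensor_pow m \<rho> n M = (\<lambda>c d. \<Sum>a<m ^ n. \<Sum>b<m ^ n.
      (\<Prod>j<n. noise_coeff m \<rho> (digit m j a) (digit m j b) (digit m j c) (digit m j d)) * M a b)"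

lemma index_tensor_pow_map_noise_op:
  assumes "0 < m" "c < m ^ n" "d < m ^ n"
  shows "tensor_pow_map m n (noise_op m \<rho>) M $$ (c, d) = noise_tensor_pow m \<rho> n (fmat_of_mat M) c d"
  using assms
  by (simp add: tensor_pow_map_def noise_tensor_pow_def fmat_of_mat_def index_noise_op_unit_mat digit_def)

lemma noise_tensor_pow_diff:
  "noise_tensor_pow m \<rho> n (\<lambda>x y. U x y - V x y) c d
     = noise_tensor_pow m \<rho> n U c d - noise_tensor_pow m \<rho> n V c d"
  unfolding noise_tensor_pow_def by (simp add: algebra_simps sum_subtractf)

lemma noise_tensor_pow_scale_sum:
  "noise_tensor_pow m \<rho> n (\<lambda>x y. \<alpha> * (\<Sum>e\<in>E. U e x y)) c d
     = \<alpha> * (\<Sum>e\<in>E. noise_tensor_pow m \<rho> n (U e) c d)"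
  unfolding noise_tensor_pow_def sum_distrib_left
  by (subst sum.swap, rule sum.cong[OF refl], subst sum.swap, rule sum.cong[OF refl])
    (simp add: algebra_simps sum_distrib_left)

lemma digit_add_mult_power_low:
  assumes "0 < m" "j < n" "x < m ^ n"
  shows "digit m j (x + m ^ n * a) = digit m j x"
proof -
  have "n = j + Suc (n - Suc j)"
    using assms(2) by simp
  then have "m ^ n = m ^ j * (m * m ^ (n - Suc j))"
    by (metis power_add power_Suc)
  then have "(x + m ^ n * a) div m ^ j = m * (m ^ (n - Suc j) * a) + x div m ^ j"
    using assms(1) by (simp add: mult.assoc)
  then show ?thesis
    by (simp add: digit_def)
qed

lemma digit_add_mult_power_top:
  assumes "0 < m" "x < m ^ n" "a < m"
  shows "digit m n (x + m ^ n * a) = a"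
  using assms by (simp add: digit_def)

lemma bij_betw_add_mult:
  fixes m k :: nat
  assumes "0 < k"
  shows "bij_betw (\<lambda>p. snd p + k * fst p) ({..<m} \<times> {..<k}) {..<m * k}"
proof -
  have "snd p + k * fst p < m * k" if "p \<in> {..<m} \<times> {..<k}" for p
  proof -
    have "fst p < m" "snd p < k"
      using that by auto
    then have "snd p + k * fst p < k + k * fst p" and "k + k * fst p \<le> k * m"
      using mult_le_mono2[OF Suc_leI, of "fst p" m k] by simp_all
    then show ?thesis
      by (simp add: mult.commute)
  qed
  then show ?thesis
    using assms
    by (intro bij_betw_byWitness[where f' = "\<lambda>i. (i div k, i mod k)"])
      (auto simp: less_mult_imp_div_less)
qed

definition block_of :: "nat \<Rightarrow> nat fmat \<Rightarrow> nat \<Rightarrow> nat \<Rightarrow> nat fmat" where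
  "block_of k M a b = (\<lambda>x y. M (x + k * a) (y + k * b))"

lemma noise_tensor_pow_Suc:
  assumes m: "0 < m" and "c < m ^ n" "d < m ^ n" "c' < m" "d' < m"
  shows "noise_tensor_pow m \<rho> (Suc n) M (c + m ^ n * c') (d + m ^ n * d')
    = (\<Sum>a'<m. \<Sum>b'<m. noise_coeff m \<rho> a' b' c' d' * noise_tensor_pow m \<rho> n (block_of (m ^ n) M a' b') c d)"
proof -
  let ?k = "m ^ n"
  have split: "(\<Sum>i<m ^ Suc n. f i) = (\<Sum>a'<m. \<Sum>a<?k. f (a + ?k * a'))" for f :: "nat \<Rightarrow> complex"
  proof -
    have "(\<Sum>i<m ^ Suc n. f i) = (\<Sum>x\<in>{..<m} \<times> {..<?k}. f (snd x + ?k * fst x))"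
      using sum.reindex_bij_betw[OF bij_betw_add_mult[of ?k m], of f] m
      by (simp add: mult.commute)
    then show ?thesis
      by (simp add: sum.cartesian_product')
  qed
  let ?P = "\<lambda>a b. \<Prod>j<n. noise_coeff m \<rho> (digit m j a) (digit m j b) (digit m j c) (digit m j d)"
  have "noise_tensor_pow m \<rho> (Suc n) M (c + ?k * c') (d + ?k * d')
      = (\<Sum>a'<m. \<Sum>a<?k. \<Sum>b'<m. \<Sum>b<?k.
          noise_coeff m \<rho> a' b' c' d' * (?P a b * M (a + ?k * a') (b + ?k * b')))"
    unfolding noise_tensor_pow_def split
    using assms by (intro sum.cong refl) (simp add: digit_add_mult_power_low digit_add_mult_power_top)
  also have "\<dots> = (\<Sum>a'<m. \<Sum>b'<m. \<Sum>a<?k. \<Sum>b<?k.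
          noise_coeff m \<rho> a' b' c' d' * (?P a b * M (a + ?k * a') (b + ?k * b')))"
    by (rule sum.cong[OF refl]) (rule sum.swap)
  also have "\<dots> = (\<Sum>a'<m. \<Sum>b'<m. noise_coeff m \<rho> a' b' c' d' * noise_tensor_pow m \<rho> n (block_of ?k M a' b') c d)"
    by (simp add: noise_tensor_pow_def block_of_def sum_distrib_left)
  finally show ?thesis .
qed

definition diag_mean :: "'a set \<Rightarrow> ('a \<Rightarrow> 'a \<Rightarrow> 'b fmat) \<Rightarrow> 'b fmat" where
  "diag_mean A W = (\<lambda>x y. (\<Sum>a\<in>A. W a a x y) / of_nat (card A))"

definition centered_blocks :: "'a set \<Rightarrow> ('a \<Rightarrow> 'a \<Rightarrow> 'b fmat) \<Rightarrow> 'a \<Rightarrow> 'a \<Rightarrow> 'b fmat" where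
  "centered_blocks A W a b = (\<lambda>x y. W a b x y - (if a = b then diag_mean A W x y else 0))"

lemma sum_diag_centered_blocks:
  "finite A \<Longrightarrow> A \<noteq> {} \<Longrightarrow> (\<Sum>a\<in>A. centered_blocks A W a a x y) = 0"
  by (simp add: centered_blocks_def diag_mean_def sum_subtractf)

lemma sum_cmod_sq_eq_mean_plus_deviation:
  fixes v :: "'a \<Rightarrow> complex"
  assumes "finite A" "A \<noteq> {}"
  defines "z \<equiv> (\<Sum>a\<in>A. v a) / of_nat (card A)"
  shows "(\<Sum>a\<in>A. (cmod (v a))\<^sup>2) = card A * (cmod z)\<^sup>2 + (\<Sum>a\<in>A. (cmod (v a - z))\<^sup>2)"
proof -
  have dev: "(cmod (v a - z))\<^sup>2 = (cmod (v a))\<^sup>2 + (cmod z)\<^sup>2 - 2 * Re (cnj z * v a)" for a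
    by (simp only: cmod_power2) (simp add: power2_eq_square algebra_simps)
  have sum_v: "(\<Sum>a\<in>A. v a) = of_nat (card A) * z"
    using assms by (simp add: z_def)
  have "(\<Sum>a\<in>A. Re (cnj z * v a)) = Re (cnj z * (\<Sum>a\<in>A. v a))"
    by (simp add: sum_distrib_left Re_sum)
  also have "\<dots> = card A * (cmod z)\<^sup>2"
    unfolding sum_v cmod_power2 by (simp add: power2_eq_square algebra_simps)
  finally have "(\<Sum>a\<in>A. Re (cnj z * v a)) = card A * (cmod z)\<^sup>2" .
  then show ?thesis
    unfolding dev by (simp add: sum.distrib sum_subtractf flip: sum_distrib_left)
qed

lemma sum_frob_sq_blocks_eq_mean_plus_centered:
  assumes "finite A" "A \<noteq> {}"
  shows "(\<Sum>a\<in>A. \<Sum>b\<in>A. frob_sq S (W a b))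
    = card A * frob_sq S (diag_mean A W) + (\<Sum>a\<in>A. \<Sum>b\<in>A. frob_sq S (centered_blocks A W a b))"
proof -
  have split: "(\<Sum>a\<in>A. \<Sum>b\<in>A. f a b) = (\<Sum>a\<in>A. f a a) + (\<Sum>a\<in>A. \<Sum>b\<in>A - {a}. f a b)"
    for f :: "'a \<Rightarrow> 'a \<Rightarrow> real"
    unfolding sum.distrib[symmetric] using assms(1) by (intro sum.cong refl sum.remove)
  have off_diag: "(\<Sum>a\<in>A. \<Sum>b\<in>A - {a}. frob_sq S (W a b))
      = (\<Sum>a\<in>A. \<Sum>b\<in>A - {a}. frob_sq S (centered_blocks A W a b))"
    by (intro sum.cong refl) (auto simp: centered_blocks_def)
  have "(\<Sum>a\<in>A. frob_sq S (W a a)) = (\<Sum>x\<in>S. \<Sum>y\<in>S. \<Sum>a\<in>A. (cmod (W a a x y))\<^sup>2)"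
    unfolding frob_sq_def by (subst sum.swap) (simp add: sum.swap[of _ A])
  also have "\<dots> = (\<Sum>x\<in>S. \<Sum>y\<in>S. card A * (cmod (diag_mean A W x y))\<^sup>2
      + (\<Sum>a\<in>A. (cmod (W a a x y - diag_mean A W x y))\<^sup>2))"
    unfolding diag_mean_def using assms by (intro sum.cong refl sum_cmod_sq_eq_mean_plus_deviation)
  also have "\<dots> = card A * frob_sq S (diag_mean A W) + (\<Sum>a\<in>A. frob_sq S (centered_blocks A W a a))"
    unfolding frob_sq_def centered_blocks_def
    by (simp add: sum.distrib sum_distrib_left) (subst sum.swap, simp add: sum.swap[of _ A])
  finally show ?thesis
    by (simp add: split off_diag)
qed

lemma noise_tensor_pow_diag_mean:
  "noise_tensor_pow m \<rho> n (diag_mean A W) = diag_mean A (\<lambda>a b. noise_tensor_pow m \<rho> n (W a b))"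
  using noise_tensor_pow_scale_sum[of m \<rho> n "1 / of_nat (card A)" "\<lambda>a. W a a" A]
  by (intro ext) (simp add: diag_mean_def)

lemma noise_tensor_pow_centered_blocks:
  "noise_tensor_pow m \<rho> n (centered_blocks A W a b)
     = centered_blocks A (\<lambda>a b. noise_tensor_pow m \<rho> n (W a b)) a b"
  by (intro ext, cases "a = b")
    (simp_all add: centered_blocks_def noise_tensor_pow_diff noise_tensor_pow_diag_mean)

lemma noise_tensor_pow_Suc_blocks:
  fixes M :: "nat fmat" and \<rho> :: real
  assumes m: "0 < m" and x: "x \<in> {..<m} \<times> {..<m ^ n}" and y: "y \<in> {..<m} \<times> {..<m ^ n}"
  defines "N \<equiv> \<lambda>a b. noise_tensor_pow m \<rho> n (block_of (m ^ n) M a b)"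
  shows "noise_tensor_pow m \<rho> (Suc n) M (snd x + m ^ n * fst x) (snd y + m ^ n * fst y)
    = block_diag {..<m} {..<m ^ n} (diag_mean {..<m} N) x y
      + complex_of_real \<rho> * block_mat {..<m} {..<m ^ n} (centered_blocks {..<m} N) x y"
proof -
  obtain c' c d' d where xy: "x = (c', c)" "y = (d', d)"
    by (cases x, cases y)
  have "noise_tensor_pow m \<rho> (Suc n) M (snd x + m ^ n * fst x) (snd y + m ^ n * fst y)
      = complex_of_real \<rho> * N c' d' c d
        + (if c' = d' then complex_of_real ((1 - \<rho>) / real m) * (\<Sum>a<m. N a a c d) else 0)"
    using x y unfolding xy N_def
    by (simp add: noise_tensor_pow_Suc[OF m] sum_noise_coeff)
  then show ?thesis
    using x y m unfolding xy
    by (simp add: block_diag_def block_mat_def centered_blocks_def diag_mean_def field_simps)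
qed

section \<open>The induction on the number of tensor factors\<close>

lemma perturbation_bound_mono:
  assumes "0 \<le> c" "0 \<le> r" "0 \<le> g" "g \<le> g'" "0 \<le> h" "h \<le> h'"
  shows "perturbation_bound c r g h \<le> perturbation_bound c r g' h'"
proof -
  have gh: "g * h \<le> g' * h'"
    using assms by (intro mult_mono) auto
  then have "sqrt (g * h) * h \<le> sqrt (g' * h') * h'"
    using assms by (intro mult_mono real_sqrt_le_mono) auto
  with gh show ?thesis
    unfolding perturbation_bound_def using assms
    by (intro add_mono mult_left_mono mult_mono power_mono) auto
qed

lemma perturbation_bound_scale:
  "0 \<le> t \<Longrightarrow> perturbation_bound c r (t * g) (t * h) = t\<^sup>2 * perturbation_bound c r g h"
  by (simp add: perturbation_bound_def real_sqrt_mult power2_eq_square algebra_simps)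

(* The range of \<rho> makes the three correction terms fit exactly into 2 m x y + y^2,
   with shares 3/2 + 1/2 of the first and 8/9 + 1/9 of the second. *)
lemma perturbation_bound_le_square:
  fixes m \<rho> x y :: real
  assumes m: "2 \<le> m" and \<rho>: "0 \<le> \<rho>" "\<rho>\<^sup>2 * sqrt m \<le> 1 / 3" and xy: "0 \<le> x" "0 \<le> y"
  shows "m * perturbation_bound m \<rho> x y \<le> (m * x + y)\<^sup>2"
proof -
  define w where "w = sqrt m"
  define t where "t = \<rho>\<^sup>2 * w"
  have w2: "w\<^sup>2 = m" and w0: "0 \<le> w"
    using m by (simp_all add: w_def)
  have w43: "4 / 3 \<le> w"
    unfolding w_def using m by (intro real_le_rsqrt) (simp add: power2_eq_square)
  have t: "0 \<le> t" "t \<le> 1 / 3"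
    using \<rho> w0 by (simp_all add: t_def w_def)
  have \<rho>_sq: "\<rho>\<^sup>2 \<le> 1"
    using t w43 mult_left_mono[OF w43, of "\<rho>\<^sup>2"] by (simp add: t_def)
  define u v where "u = sqrt x" and "v = sqrt y"
  have uv: "0 \<le> u" "0 \<le> v" "u\<^sup>2 = x" "v\<^sup>2 = y" "sqrt (x * y) = u * v"
    using xy by (simp_all add: u_def v_def real_sqrt_mult)
  have first: "6 * \<rho>\<^sup>2 * m * (x * y) \<le> 3 / 2 * m * (x * y)"
  proof -
    have "6 * \<rho>\<^sup>2 * m = 6 * t * w"
      using w2 by (simp add: t_def power2_eq_square)
    also have "\<dots> \<le> 2 * w"
      using t w0 by (simp add: mult_right_mono)
    also have "\<dots> \<le> 3 / 2 * m"
      using mult_right_mono[OF w43 w0] w2 by (simp add: power2_eq_square)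
    finally show ?thesis
      by (rule mult_right_mono) (use xy in simp)
  qed
  have second: "4 * \<rho> ^ 3 * m * (u * v * y) \<le> 1 / 2 * m * (x * y) + 8 / 9 * y\<^sup>2"
  proof -
    have "4 * \<rho> ^ 3 * m * (u * v * y) = 4 * t * ((\<rho> * w * u * v) * y)"
      using w2 by (simp add: t_def power2_eq_square power3_eq_cube algebra_simps)
    also have "\<dots> \<le> 4 / 3 * (\<rho> * w * u * v * y)"
      using t \<rho> w0 uv xy by (intro mult_right_mono) auto
    also have "\<dots> \<le> (1 / 2 * (w * u)\<^sup>2 + 8 / 9 * (\<rho> * v)\<^sup>2) * y"
    proof -
      have "0 \<le> 1 / 2 * (w * u - 4 / 3 * (\<rho> * v))\<^sup>2"
        by simp
      then have "4 / 3 * (\<rho> * w * u * v) \<le> 1 / 2 * (w * u)\<^sup>2 + 8 / 9 * (\<rho> * v)\<^sup>2"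
        by (simp add: power2_eq_square algebra_simps)
      from mult_right_mono[OF this xy(2)] show ?thesis
        by (simp add: mult.assoc)
    qed
    also have "\<dots> \<le> 1 / 2 * m * (x * y) + 8 / 9 * y\<^sup>2"
      using \<rho>_sq uv w2 xy mult_right_mono[OF \<rho>_sq, of "y\<^sup>2"]
      by (simp add: power_mult_distrib power2_eq_square algebra_simps)
    finally show ?thesis .
  qed
  have third: "\<rho> ^ 4 * m * y\<^sup>2 \<le> 1 / 9 * y\<^sup>2"
  proof -
    have "\<rho> ^ 4 * m = t\<^sup>2"
      using w2 by (simp add: t_def power_mult_distrib flip: power_mult)
    also have "\<dots> \<le> (1 / 3)\<^sup>2"
      using t by (intro power_mono) auto
    also have "\<dots> = 1 / 9"
      by (simp add: power2_eq_square)
    finally show ?thesis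
      by (rule mult_right_mono) simp
  qed
  have "m * perturbation_bound m \<rho> x y
      = m\<^sup>2 * x\<^sup>2 + 6 * \<rho>\<^sup>2 * m * (x * y) + 4 * \<rho> ^ 3 * m * (u * v * y) + \<rho> ^ 4 * m * y\<^sup>2"
    by (simp add: perturbation_bound_def uv power2_eq_square algebra_simps)
  also have "\<dots> \<le> m\<^sup>2 * x\<^sup>2 + 2 * m * (x * y) + y\<^sup>2"
    using first second third by linarith
  also have "\<dots> = (m * x + y)\<^sup>2"
    by (simp add: power2_eq_square algebra_simps)
  finally show ?thesis .
qed

lemma schatten4_pow4_noise_tensor_pow_Suc_le:
  fixes M :: "nat fmat" and n :: nat
  assumes m: "0 < m" and "0 \<le> \<rho>"
  defines "B \<equiv> block_of (m ^ n) M"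
  shows "schatten4_pow4 {..<m ^ Suc n} (noise_tensor_pow m \<rho> (Suc n) M)
    \<le> perturbation_bound m \<rho>
         (sqrt (schatten4_pow4 {..<m ^ n} (noise_tensor_pow m \<rho> n (diag_mean {..<m} B))))
         (\<Sum>a<m. \<Sum>b<m. sqrt (schatten4_pow4 {..<m ^ n}
            (noise_tensor_pow m \<rho> n (centered_blocks {..<m} B a b))))"
proof -
  let ?A = "{..<m}" and ?S = "{..<m ^ n}"
  define N where "N = (\<lambda>a b. noise_tensor_pow m \<rho> n (B a b))"
  have bij: "bij_betw (\<lambda>p. snd p + m ^ n * fst p) (?A \<times> ?S) {..<m ^ Suc n}"
    using bij_betw_add_mult[of "m ^ n" m] m by (simp add: mult.commute)
  have diag_sum: "(\<Sum>a\<in>?A. centered_blocks ?A N a a c d) = 0" for c d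
    using m by (intro sum_diag_centered_blocks) auto
  have "schatten4_pow4 {..<m ^ Suc n} (noise_tensor_pow m \<rho> (Suc n) M)
      = schatten4_pow4 (?A \<times> ?S) (\<lambda>p q. block_diag ?A ?S (diag_mean ?A N) p q
          + complex_of_real \<rho> * block_mat ?A ?S (centered_blocks ?A N) p q)"
    unfolding schatten4_pow4_reindex[OF bij, symmetric] N_def B_def
    by (intro schatten4_pow4_cong noise_tensor_pow_Suc_blocks m) auto
  also have "\<dots> \<le> perturbation_bound m \<rho> (sqrt (schatten4_pow4 ?S (diag_mean ?A N)))
      (\<Sum>a<m. \<Sum>b<m. sqrt (schatten4_pow4 ?S (centered_blocks ?A N a b)))"
    using schatten4_pow4_block_perturb_le[of ?A ?S "centered_blocks ?A N" \<rho> "diag_mean ?A N"]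
      diag_sum \<open>0 \<le> \<rho>\<close>
    by simp
  finally show ?thesis
    by (simp add: N_def noise_tensor_pow_diag_mean noise_tensor_pow_centered_blocks)
qed

lemma frob_sq_eq_mean_plus_centered_blocks:
  assumes "0 < m"
  shows "frob_sq {..<m ^ Suc n} M
    = m * frob_sq {..<m ^ n} (diag_mean {..<m} (block_of (m ^ n) M))
      + (\<Sum>a<m. \<Sum>b<m. frob_sq {..<m ^ n} (centered_blocks {..<m} (block_of (m ^ n) M) a b))"
proof -
  let ?A = "{..<m}" and ?S = "{..<m ^ n}"
  have bij: "bij_betw (\<lambda>p. snd p + m ^ n * fst p) (?A \<times> ?S) {..<m ^ Suc n}"
    using bij_betw_add_mult[of "m ^ n" m] assms by (simp add: mult.commute)
  have "frob_sq {..<m ^ Suc n} M = frob_sq (?A \<times> ?S) (block_mat ?A ?S (block_of (m ^ n) M))"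
    unfolding frob_sq_reindex[OF bij, symmetric]
    by (intro frob_sq_cong) (auto simp: block_mat_def block_of_def)
  then show ?thesis
    using sum_frob_sq_blocks_eq_mean_plus_centered[of ?A ?S "block_of (m ^ n) M"] assms
    by (simp add: frob_sq_block_mat lessThan_empty_iff)
qed

lemma schatten4_pow4_noise_tensor_pow_le:
  fixes m :: nat and \<rho> :: real
  assumes m: "2 \<le> m" and \<rho>: "0 \<le> \<rho>" "\<rho>\<^sup>2 * sqrt (real m) \<le> 1 / 3"
  shows "real (m ^ n) * schatten4_pow4 {..<m ^ n} (noise_tensor_pow m \<rho> n M) \<le> (frob_sq {..<m ^ n} M)\<^sup>2"
proof (induction n arbitrary: M)
  case 0
  have "noise_tensor_pow m \<rho> 0 M = (\<lambda>c d. M 0 0)"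
    by (simp add: noise_tensor_pow_def)
  then show ?case
    by (simp add: schatten4_pow4_def frob_sq_def fmat_mult_def fmat_adj_def norm_mult power2_eq_square)
next
  case (Suc n)
  let ?k = "m ^ n" and ?A = "{..<m}" and ?S = "{..<m ^ n}"
  define B where "B = block_of ?k M"
  define g where "g = sqrt (schatten4_pow4 ?S (noise_tensor_pow m \<rho> n (diag_mean ?A B)))"
  define h where "h = (\<Sum>a<m. \<Sum>b<m. sqrt (schatten4_pow4 ?S
    (noise_tensor_pow m \<rho> n (centered_blocks ?A B a b))))"
  define x where "x = frob_sq ?S (diag_mean ?A B)"
  define y where "y = (\<Sum>a<m. \<Sum>b<m. frob_sq ?S (centered_blocks ?A B a b))"
  have m0: "0 < m"
    using m by simp
  have IH: "sqrt ?k * sqrt (schatten4_pow4 ?S (noise_tensor_pow m \<rho> n X)) \<le> frob_sq ?S X" for X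
    using real_sqrt_le_mono[OF Suc.IH[of X]] by (simp add: real_sqrt_mult)
  have "0 \<le> g" "0 \<le> h" "sqrt ?k * g \<le> x" "sqrt ?k * h \<le> y"
    unfolding g_def h_def x_def y_def sum_distrib_left using IH by (auto intro!: sum_nonneg sum_mono)
  have "real (m ^ Suc n) * schatten4_pow4 {..<m ^ Suc n} (noise_tensor_pow m \<rho> (Suc n) M)
      \<le> m * ?k * perturbation_bound m \<rho> g h"
    using schatten4_pow4_noise_tensor_pow_Suc_le[OF m0 \<rho>(1), of n M]
    by (simp add: g_def h_def B_def mult_left_mono)
  also have "\<dots> = m * perturbation_bound m \<rho> (sqrt ?k * g) (sqrt ?k * h)"
    by (simp add: perturbation_bound_scale)
  also have "\<dots> \<le> m * perturbation_bound m \<rho> x y"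
    using \<open>0 \<le> g\<close> \<open>0 \<le> h\<close> \<open>sqrt ?k * g \<le> x\<close> \<open>sqrt ?k * h \<le> y\<close> \<rho>
    by (intro mult_left_mono perturbation_bound_mono) auto
  also have "\<dots> \<le> (m * x + y)\<^sup>2"
    using m \<rho> by (intro perturbation_bound_le_square) (auto simp: x_def y_def intro!: sum_nonneg)
  also have "m * x + y = frob_sq {..<m ^ Suc n} M"
    using frob_sq_eq_mean_plus_centered_blocks[OF m0, of n M] by (simp add: x_def y_def B_def)
  finally show ?case .
qed

lemma frob_sq_fmat_of_mat_pos:
  assumes "M \<in> carrier_mat k k" "M \<noteq> 0\<^sub>m k k"
  shows "0 < frob_sq {..<k} (fmat_of_mat M)"
proof -
  obtain i j where "i < k" "j < k" "M $$ (i, j) \<noteq> 0"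
    using assms by (metis eq_matI carrier_matD index_zero_mat)
  then show ?thesis
    by (intro frob_sq_pos[of _ i j]) (auto simp: fmat_of_mat_def)
qed

lemma norm_p'_2_eq:
  "A \<in> carrier_mat k k \<Longrightarrow> norm_p' 2 A = (frob_sq {..<k} (fmat_of_mat A) / k) powr (1 / 2)"
  by (simp add: norm_p'_def sum_sing_vals_powr)

lemma norm_p'_4_eq:
  "A \<in> carrier_mat k k \<Longrightarrow> norm_p' 4 A = (schatten4_pow4 {..<k} (fmat_of_mat A) / k) powr (1 / 4)"
  by (simp add: norm_p'_def sum_sing_vals_powr)

lemma norm_p'_4_le_norm_p'_2:
  assumes "A \<in> carrier_mat k k" "B \<in> carrier_mat k k"
    and le: "k * schatten4_pow4 {..<k} (fmat_of_mat B) \<le> (frob_sq {..<k} (fmat_of_mat A))\<^sup>2"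
  shows "norm_p' 4 B \<le> norm_p' 2 A"
proof -
  let ?F = "frob_sq {..<k} (fmat_of_mat A) / k" and ?G = "schatten4_pow4 {..<k} (fmat_of_mat B) / k"
  have "?G \<le> ?F\<^sup>2"
    using le by (cases "k = 0") (simp_all add: field_simps power2_eq_square)
  then have "?G powr (1 / 4) \<le> (?F\<^sup>2) powr (1 / 4)"
    by (intro powr_mono2) auto
  also have "\<dots> = ?F powr (1 / 2)"
    by (simp add: powr_powr flip: powr_numeral)
  finally show ?thesis
    using assms by (simp add: norm_p'_2_eq norm_p'_4_eq)
qed

lemma op_norm_pq_le:
  assumes "0 < k"
    and bound: "\<And>M. M \<in> carrier_mat k k \<Longrightarrow> M \<noteq> 0\<^sub>m k k \<Longrightarrow> norm_p' q (L M) \<le> c * norm_p' p M"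
    and pos: "\<And>M. M \<in> carrier_mat k k \<Longrightarrow> M \<noteq> 0\<^sub>m k k \<Longrightarrow> 0 < norm_p' p M"
  shows "op_norm_pq k p q L \<le> c"
  unfolding op_norm_pq_def
proof (rule cSup_least)
  have "(1\<^sub>m k :: complex mat) $$ (0, 0) \<noteq> 0\<^sub>m k k $$ (0, 0)"
    using assms(1) by simp
  then have "(1\<^sub>m k :: complex mat) \<noteq> 0\<^sub>m k k"
    by metis
  then show "{norm_p' q (L M) / norm_p' p M | M. M \<in> carrier_mat k k \<and> M \<noteq> 0\<^sub>m k k} \<noteq> {}"
    by (auto intro!: exI[of _ "1\<^sub>m k"])
next
  fix x assume "x \<in> {norm_p' q (L M) / norm_p' p M | M. M \<in> carrier_mat k k \<and> M \<noteq> 0\<^sub>m k k}"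
  then obtain M where x: "x = norm_p' q (L M) / norm_p' p M" and M: "M \<in> carrier_mat k k" "M \<noteq> 0\<^sub>m k k"
    by blast
  show "x \<le> c"
    using bound[OF M] pos[OF M] by (simp add: x pos_divide_le_eq mult.commute)
qed

theorem lemma8p2:
  fixes m n :: nat and \<rho> :: real
  assumes "m \<ge> 2" and "0 \<le> \<rho>" and "\<rho> \<le> sqrt (1 / (3 * sqrt (real m)))" and "n \<ge> 1"
  shows "op_norm_pq (m ^ n) 2 4 (tensor_pow_map m n (noise_op m \<rho>)) \<le> 1"
proof -
  have m: "0 < m"
    using assms(1) by simp
  have "\<rho>\<^sup>2 \<le> 1 / (3 * sqrt (real m))"
    using power_mono[OF assms(3) assms(2), of 2] by simp
  then have small: "\<rho>\<^sup>2 * sqrt (real m) \<le> 1 / 3"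
    using m by (simp add: field_simps)
  show ?thesis
  proof (rule op_norm_pq_le)
    fix M :: "complex mat"
    assume M: "M \<in> carrier_mat (m ^ n) (m ^ n)" and nz: "M \<noteq> 0\<^sub>m (m ^ n) (m ^ n)"
    let ?LM = "tensor_pow_map m n (noise_op m \<rho>) M"
    have "schatten4_pow4 {..<m ^ n} (fmat_of_mat ?LM)
        = schatten4_pow4 {..<m ^ n} (noise_tensor_pow m \<rho> n (fmat_of_mat M))"
      using m by (intro schatten4_pow4_cong) (simp add: fmat_of_mat_def[of ?LM] index_tensor_pow_map_noise_op)
    then have "norm_p' 4 ?LM \<le> norm_p' 2 M"
      using schatten4_pow4_noise_tensor_pow_le[OF assms(1,2) small] M
      by (intro norm_p'_4_le_norm_p'_2) (auto simp: tensor_pow_map_def)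
    then show "norm_p' 4 ?LM \<le> 1 * norm_p' 2 M"
      by simp
    show "0 < norm_p' 2 M"
      using frob_sq_fmat_of_mat_pos[OF M nz] M m by (simp add: norm_p'_2_eq)
  qed (use m in simp)
qed

end
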